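(* Let $m\ge2$ and let $\mathcal{A}\in\mathbb{T}_{m,n}$ be a circulant tensor with root tensor $\mathcal{A}_1$. If $\mathcal{A}_1$ is copositive (respectively strictly copositive), then $\mathcal{A}$ is copositive (respectively strictly copositive). Moreover, if $\mathcal{A}$ is doubly circulant, then $\mathcal{A}$ is copositive (respectively strictly copositive) if and only if $\mathcal{A}_1$ is copositive (respectively strictly copositive).
   Context: $\mathbb{T}_{m,n}$ is the space of real $m$th order $n$-dimensional tensors $\mathcal{A}=(a_{i_1\ldots i_m})$, $i_j\in[n]$. For $\mathcal{A}\in\mathbb{T}_{m,n}$ and $x\in\mathbb{R}^n$, $\mathcal{A}x^m=\sum_{i_1,\dots,i_m}a_{i_1\ldots i_m}x_{i_1}\cdots x_{i_m}$. $\mathcal{A}$ is copositive if $\mathcal{A}x^m\ge0$ for all $x\in\mathbb{R}^n_+$, and strictly copositive if $\mathcal{A}x^m>0$ for all $x\in\mathbb{R}^n_+\setminus\{0\}$ (same definitions in $\mathbb{T}_{m-1,n}$). $\mathcal{A}$ is circulant if $a_{i_1\ldots i_m}=a_{k_1\ldots k_m}$ whenever $k_j\equiv i_j+1 \pmod n$ with $k_j\in[n]$ for all $j$. The $k$th row tensor $\mathcal{A}_k\in\mathbb{T}_{m-1,n}$ has entries $(\mathcal{A}_k)_{j_1\ldots j_{m-1}}=a_{kj_1\ldots j_{m-1}}$; $\mathcal{A}_1$ is the root tensor. A circulant tensor is doubly circulant if all its row tensors coincide with its root tensor, i.e. $\mathcal{A}_k=\mathcal{A}_1$ for all $k\in[n]$.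 *)

theory Defs
  imports Complex_Main
begin

text \<open>Tensors of order m and dimension n are functions from index lists to reals;
  only lists of length m with entries in {0..<n} are relevant (0-based indices
  stand for the paper's [n] = {1..n}). Vectors x in R^n are functions nat to real,
  only the values at 0..<n are relevant.\<close>

type_synonym tensor = "nat list \<Rightarrow> real"

definition idx :: "nat \<Rightarrow> nat \<Rightarrow> nat list set" where
  "idx m n = {is. length is = m \<and> set is \<subseteq> {..<n}}"

definition tensor_form :: "nat \<Rightarrow> nat \<Rightarrow> tensor \<Rightarrow> (nat \<Rightarrow> real) \<Rightarrow> real" where
  "tensor_form m n A x = (\<Sum>is\<in>idx m n. A is * prod_list (map x is))"

definition nonneg_vec :: "nat \<Rightarrow> (nat \<Rightarrow> real) \<Rightarrow> bool" where
  "nonneg_vec n x \<longleftrightarrow> (\<forall>i<n. 0 \<le> x i)"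

definition copositive :: "nat \<Rightarrow> nat \<Rightarrow> tensor \<Rightarrow> bool" where
  "copositive m n A \<longleftrightarrow> (\<forall>x. nonneg_vec n x \<longrightarrow> 0 \<le> tensor_form m n A x)"

definition strictly_copositive :: "nat \<Rightarrow> nat \<Rightarrow> tensor \<Rightarrow> bool" where
  "strictly_copositive m n A \<longleftrightarrow>
     (\<forall>x. nonneg_vec n x \<and> (\<exists>i<n. x i \<noteq> 0) \<longrightarrow> 0 < tensor_form m n A x)"

definition circulant :: "nat \<Rightarrow> nat \<Rightarrow> tensor \<Rightarrow> bool" where
  "circulant m n A \<longleftrightarrow> (\<forall>is\<in>idx m n. A (map (\<lambda>i. (i + 1) mod n) is) = A is)"

text \<open>k-th row tensor (order m-1); the root tensor is row_tensor A 0.\<close>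
definition row_tensor :: "tensor \<Rightarrow> nat \<Rightarrow> tensor" where
  "row_tensor A k = (\<lambda>js. A (k # js))"

definition doubly_circulant :: "nat \<Rightarrow> nat \<Rightarrow> tensor \<Rightarrow> bool" where
  "doubly_circulant m n A \<longleftrightarrow> circulant m n A \<and>
     (\<forall>k<n. \<forall>js\<in>idx (m - 1) n. row_tensor A k js = row_tensor A 0 js)"

end

theory Submission
  imports Defs
begin

text \<open>Expanding the form along the first index writes \<open>\<A>x\<^sup>m\<close> as the sum over k of
  \<open>x\<^sub>k\<close> times the form of the k-th row tensor at x. For a circulant tensor the k-th row
  tensor at x equals the root tensor at the cyclic shift of x by k, and cyclic shifts preserve
  nonnegativity and nonvanishing. Hence copositivity of the root tensor makes every summand
  nonnegative, and strict copositivity makes the summand at a nonzero coordinate positive.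
  If all rows coincide, the expansion collapses to \<open>(\<Sum>\<^sub>k x\<^sub>k)\<close> times the form of the
  root tensor at x; the first factor is positive for nonzero nonnegative x, which gives the
  converse.\<close>

definition cyclic_shift :: "nat \<Rightarrow> nat \<Rightarrow> (nat \<Rightarrow> real) \<Rightarrow> nat \<Rightarrow> real" where
  "cyclic_shift n k x = (\<lambda>j. x ((j + k) mod n))"

lemma idx_Suc: "idx (Suc m) n = (\<lambda>(k, js). k # js) ` ({..<n} \<times> idx m n)"
proof (rule set_eqI)
  fix l show "l \<in> idx (Suc m) n \<longleftrightarrow> l \<in> (\<lambda>(k, js). k # js) ` ({..<n} \<times> idx m n)"
    by (cases l) (auto simp: idx_def)
qed

lemma tensor_form_Suc:
  "tensor_form (Suc m) n A x = (\<Sum>k<n. x k * tensor_form m n (row_tensor A k) x)"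
proof -
  have inj: "inj_on (\<lambda>(k, js). k # js) ({..<n} \<times> idx m n)"
    by (auto simp: inj_on_def)
  have "tensor_form (Suc m) n A x
      = (\<Sum>(k, js)\<in>{..<n} \<times> idx m n. A (k # js) * (x k * prod_list (map x js)))"
    unfolding tensor_form_def idx_Suc sum.reindex[OF inj] by (rule sum.cong) auto
  also have "\<dots> = (\<Sum>k<n. \<Sum>js\<in>idx m n. A (k # js) * (x k * prod_list (map x js)))"
    by (rule sum.cartesian_product[symmetric])
  also have "\<dots> = (\<Sum>k<n. x k * tensor_form m n (row_tensor A k) x)"
    unfolding tensor_form_def row_tensor_def sum_distrib_left
    by (intro sum.cong refl) (simp add: algebra_simps)
  finally show ?thesis .
qed

lemma tensor_form_eq_0:
  assumes "m \<ge> 1" and "\<forall>i<n. x i = 0"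
  shows "tensor_form m n A x = 0"
  unfolding tensor_form_def
proof (intro sum.neutral ballI)
  fix l assume l: "l \<in> idx m n"
  then obtain a r where "l = a # r" and "a < n"
    using assms(1) by (cases l) (auto simp: idx_def)
  then show "A l * prod_list (map x l) = 0" using assms(2) by simp
qed

lemma strictly_copositive_imp_copositive:
  assumes "m \<ge> 1" and "strictly_copositive m n A"
  shows "copositive m n A"
  unfolding copositive_def
proof (intro allI impI)
  fix x assume "nonneg_vec n x"
  then show "0 \<le> tensor_form m n A x"
    using assms tensor_form_eq_0[OF assms(1)]
    by (cases "\<forall>i<n. x i = 0") (auto simp: strictly_copositive_def less_imp_le)
qed

lemma circulant_shift_invariant:
  assumes "circulant m n A" and "is \<in> idx m n"
  shows "A (map (\<lambda>i. (i + t) mod n) is) = A is"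
proof (induction t)
  case 0
  have "map (\<lambda>i. i mod n) is = is"
    using assms(2) by (intro map_idI) (auto simp: idx_def)
  then show ?case by simp
next
  case (Suc t)
  have shifted: "map (\<lambda>i. (i + t) mod n) is \<in> idx m n"
    using assms(2) by (auto simp: idx_def)
  have "A (map (\<lambda>i. (i + Suc t) mod n) is)
      = A (map (\<lambda>i. (i + 1) mod n) (map (\<lambda>i. (i + t) mod n) is))"
    by (simp add: comp_def mod_Suc_eq)
  also have "\<dots> = A (map (\<lambda>i. (i + t) mod n) is)"
    using assms(1) shifted unfolding circulant_def by blast
  also have "\<dots> = A is"
    by (rule Suc.IH)
  finally show ?case .
qed

lemma nonneg_vec_cyclic_shift:
  assumes "nonneg_vec n x"
  shows "nonneg_vec n (cyclic_shift n k x)"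
  using assms by (auto simp: nonneg_vec_def cyclic_shift_def)

lemma mod_add_complement:
  fixes j k n :: nat
  assumes "j < n" and "k \<le> n"
  shows "((j + k) mod n + (n - k)) mod n = j"
proof -
  have "((j + k) mod n + (n - k)) mod n = (j + k + (n - k)) mod n"
    by (rule mod_add_left_eq)
  also have "\<dots> = (j + n) mod n"
    using assms(2) by simp
  finally show ?thesis using assms(1) by simp
qed

lemma cyclic_shift_nonzero:
  assumes "k < n" and "i < n" and "x i \<noteq> 0"
  shows "\<exists>j<n. cyclic_shift n k x j \<noteq> 0"
proof (intro exI conjI)
  show "(i + (n - k)) mod n < n" using assms(2) by simp
  show "cyclic_shift n k x ((i + (n - k)) mod n) \<noteq> 0"
    using assms mod_add_complement[of i n "n - k"] by (simp add: cyclic_shift_def)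
qed

lemma tensor_form_row_tensor_circulant:
  assumes circ: "circulant (Suc m) n A" and "k < n"
  shows "tensor_form m n (row_tensor A k) x
       = tensor_form m n (row_tensor A 0) (cyclic_shift n k x)"
proof -
  define g where "g j = (j + k) mod n" for j
  define f where "f j = (j + (n - k)) mod n" for j
  have "n > 0" using assms(2) by simp
  have g_f: "map g (map f js) = js" and f_g: "map f (map g js) = js"
    if "js \<in> idx m n" for js
  proof -
    have "\<forall>j\<in>set js. j < n" using that by (auto simp: idx_def)
    then show "map g (map f js) = js" "map f (map g js) = js"
      using assms(2) mod_add_complement[of _ n k] mod_add_complement[of _ n "n - k"]
      by (simp_all add: f_def g_def map_idI)
  qed
  have f_idx: "map f js \<in> idx m n" and g_idx: "map g js \<in> idx m n"
    if "js \<in> idx m n" for js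
    using that \<open>n > 0\<close> by (auto simp: idx_def f_def g_def)
  have row: "A (0 # map f js) = A (k # js)" if "js \<in> idx m n" for js
  proof -
    have "0 # map f js \<in> idx (Suc m) n"
      using f_idx[OF that] \<open>n > 0\<close> by (simp add: idx_def)
    moreover have "map (\<lambda>i. (i + k) mod n) (0 # map f js) = k # js"
      using g_f[OF that] assms(2) unfolding g_def by simp
    ultimately show ?thesis using circulant_shift_invariant[OF circ, of "0 # map f js" k] by simp
  qed
  show ?thesis
    unfolding tensor_form_def row_tensor_def
  proof (rule sum.reindex_bij_witness[where i="map g" and j="map f"])
    fix js assume js: "js \<in> idx m n"
    show "map g (map f js) = js" "map f js \<in> idx m n" using g_f f_idx js by blast+
    have "map (cyclic_shift n k x) (map f js) = map x (map g (map f js))"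
      by (simp add: cyclic_shift_def g_def)
    also have "\<dots> = map x js"
      by (simp only: g_f[OF js])
    finally show "A (0 # map f js) * prod_list (map (cyclic_shift n k x) (map f js))
        = A (k # js) * prod_list (map x js)"
      by (simp only: row[OF js])
  next
    fix js assume "js \<in> idx m n"
    then show "map f (map g js) = js" "map g js \<in> idx m n" using f_g g_idx by blast+
  qed
qed

lemma tensor_form_circulant:
  assumes "circulant (Suc m) n A"
  shows "tensor_form (Suc m) n A x
       = (\<Sum>k<n. x k * tensor_form m n (row_tensor A 0) (cyclic_shift n k x))"
  unfolding tensor_form_Suc
proof (rule sum.cong[OF refl])
  fix k assume "k \<in> {..<n}"
  then show "x k * tensor_form m n (row_tensor A k) x
      = x k * tensor_form m n (row_tensor A 0) (cyclic_shift n k x)"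
    using tensor_form_row_tensor_circulant[OF assms, of k x] by simp
qed

lemma copositive_weighted_shift_nonneg:
  assumes "copositive m n B" and "nonneg_vec n x" and "k < n"
  shows "0 \<le> x k * tensor_form m n B (cyclic_shift n k x)"
proof -
  have "0 \<le> x k" using assms(2,3) by (simp add: nonneg_vec_def)
  moreover have "0 \<le> tensor_form m n B (cyclic_shift n k x)"
    using assms(1) nonneg_vec_cyclic_shift[OF assms(2)] by (simp add: copositive_def)
  ultimately show ?thesis by simp
qed

lemma copositive_circulant:
  assumes "circulant (Suc m) n A" and "copositive m n (row_tensor A 0)"
  shows "copositive (Suc m) n A"
  unfolding copositive_def tensor_form_circulant[OF assms(1)]
  using copositive_weighted_shift_nonneg[OF assms(2)] by (auto intro!: sum_nonneg)

lemma strictly_copositive_circulant: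
  assumes "m \<ge> 1" and "circulant (Suc m) n A"
    and strict: "strictly_copositive m n (row_tensor A 0)"
  shows "strictly_copositive (Suc m) n A"
  unfolding strictly_copositive_def
proof (intro allI impI, elim conjE exE)
  fix x i assume x: "nonneg_vec n x" and "i < n" and "x i \<noteq> 0"
  then have i: "i < n" "0 < x i" by (auto simp: nonneg_vec_def less_le)
  let ?summand = "\<lambda>k. x k * tensor_form m n (row_tensor A 0) (cyclic_shift n k x)"
  have summands_nonneg: "0 \<le> ?summand k" if "k < n" for k
    using copositive_weighted_shift_nonneg[OF strictly_copositive_imp_copositive[OF assms(1) strict]
        x that] .
  have "0 < tensor_form m n (row_tensor A 0) (cyclic_shift n i x)"
    using strict nonneg_vec_cyclic_shift[OF x] cyclic_shift_nonzero[OF i(1) i(1)] i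
    by (force simp: strictly_copositive_def)
  then have "0 < ?summand i" using i(2) by simp
  also have "\<dots> \<le> (\<Sum>k<n. ?summand k)"
    using i(1) summands_nonneg by (intro member_le_sum) auto
  finally show "0 < tensor_form (Suc m) n A x"
    by (simp only: tensor_form_circulant[OF assms(2)])
qed

lemma tensor_form_equal_rows:
  assumes "\<forall>k<n. \<forall>js\<in>idx m n. row_tensor A k js = row_tensor A 0 js"
  shows "tensor_form (Suc m) n A x = (\<Sum>k<n. x k) * tensor_form m n (row_tensor A 0) x"
  unfolding tensor_form_Suc sum_distrib_right
proof (rule sum.cong[OF refl])
  fix k assume "k \<in> {..<n}"
  then have "row_tensor A k js = row_tensor A 0 js" if "js \<in> idx m n" for js
    using assms that by blast
  then have "tensor_form m n (row_tensor A k) x = tensor_form m n (row_tensor A 0) x"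
    unfolding tensor_form_def by (intro sum.cong refl) (simp only:)
  then show "x k * tensor_form m n (row_tensor A k) x = x k * tensor_form m n (row_tensor A 0) x"
    by simp
qed

lemma sum_pos_if_nonneg_vec:
  assumes "nonneg_vec n x" and "i < n" and "x i \<noteq> 0"
  shows "0 < (\<Sum>k<n. x k)"
  using assms by (intro sum_pos2[of _ i]) (auto simp: nonneg_vec_def less_le)

lemma copositive_root_if_equal_rows:
  assumes "m \<ge> 1" and rows: "\<forall>k<n. \<forall>js\<in>idx m n. row_tensor A k js = row_tensor A 0 js"
    and "copositive (Suc m) n A"
  shows "copositive m n (row_tensor A 0)"
  unfolding copositive_def
proof (intro allI impI)
  fix x assume x: "nonneg_vec n x"
  show "0 \<le> tensor_form m n (row_tensor A 0) x"
  proof (cases "\<forall>i<n. x i = 0")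
    case True
    then show ?thesis using tensor_form_eq_0[OF assms(1)] by simp
  next
    case False
    then have "0 < (\<Sum>k<n. x k)"
      using sum_pos_if_nonneg_vec[OF x] by blast
    moreover have "0 \<le> (\<Sum>k<n. x k) * tensor_form m n (row_tensor A 0) x"
      using assms(3) x by (simp add: copositive_def tensor_form_equal_rows[OF rows])
    ultimately show ?thesis by (simp add: zero_le_mult_iff)
  qed
qed

lemma strictly_copositive_root_if_equal_rows:
  assumes rows: "\<forall>k<n. \<forall>js\<in>idx m n. row_tensor A k js = row_tensor A 0 js"
    and "strictly_copositive (Suc m) n A"
  shows "strictly_copositive m n (row_tensor A 0)"
  unfolding strictly_copositive_def
proof (intro allI impI, elim conjE exE)
  fix x i assume x: "nonneg_vec n x" and i: "i < n" "x i \<noteq> 0"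
  then have "0 < (\<Sum>k<n. x k)"
    by (rule sum_pos_if_nonneg_vec)
  moreover have "0 < (\<Sum>k<n. x k) * tensor_form m n (row_tensor A 0) x"
    using assms(2) x i by (force simp: strictly_copositive_def tensor_form_equal_rows[OF rows])
  ultimately show "0 < tensor_form m n (row_tensor A 0) x"
    by (simp add: zero_less_mult_iff)
qed

theorem mainTheorem4:
  fixes m n :: nat and A :: tensor
  assumes "m \<ge> 2" and "circulant m n A"
  shows "(copositive (m - 1) n (row_tensor A 0) \<longrightarrow> copositive m n A)
       \<and> (strictly_copositive (m - 1) n (row_tensor A 0) \<longrightarrow> strictly_copositive m n A)
       \<and> (doubly_circulant m n A \<longrightarrow>
            (copositive m n A \<longleftrightarrow> copositive (m - 1) n (row_tensor A 0))
          \<and> (strictly_copositive m n A \<longleftrightarrow> strictly_copositive (m - 1) n (row_tensor A 0)))"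
proof -
  obtain m' where m: "m = Suc m'" and "m' \<ge> 1"
    using assms(1) by (cases m) auto
  have circ: "circulant (Suc m') n A"
    using assms(2) m by simp
  have rows: "\<forall>k<n. \<forall>js\<in>idx m' n. row_tensor A k js = row_tensor A 0 js"
    if "doubly_circulant (Suc m') n A"
    using that unfolding doubly_circulant_def diff_Suc_1 by blast
  show ?thesis
    unfolding m diff_Suc_1
    by (intro conjI impI iffI)
      (simp_all add: copositive_circulant[OF circ]
        strictly_copositive_circulant[OF \<open>m' \<ge> 1\<close> circ]
        copositive_root_if_equal_rows[OF \<open>m' \<ge> 1\<close> rows]
        strictly_copositive_root_if_equal_rows[OF rows])
qed

end
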